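(* Let $q\geq 3$ be odd. The function $h\colon(0,1]\to\mathbb{C}$, $h(x)=1/x$, satisfies $\mathcal{P}_q h=h$, i.e. it is a real analytic eigenfunction of the Perron–Frobenius operator $\mathcal{P}_q$ with eigenvalue $1$.
   Context: Let $q\geq 3$ be odd and $\lambda=2\cos(\pi/q)$. Elements of $\mathrm{PGL}_2(\mathbb{R})$ act on $\mathbb{R}\cup\{\infty\}$ by $\begin{bmatrix}a&b\\c&d\end{bmatrix}.x=(ax+b)/(cx+d)$. Put $s(x)=\sin(x\pi/q)/\sin(\pi/q)$, $g_k=\begin{bmatrix}s(k)&-s(k+1)\\-s(k-1)&s(k)\end{bmatrix}$, $Q=\begin{bmatrix}0&1\\1&0\end{bmatrix}$, $K=\{(q+1)/2,\dots,q-1\}$. For $g\in\mathrm{PGL}_2(\mathbb{R})$ and a function $f$, set $\tau(g)f(x)=|(g^{-1})'(x)|\,f(g^{-1}.x)$, where $(g^{-1})'$ is the derivative of $x\mapsto g^{-1}.x$. The Perron–Frobenius operator is $\mathcal{P}_q=\sum_{k\in K}\big(\tau(g_k)+\tau(Qg_k)\big)$ (it is the transfer operator of the generalized Farey map with respect to Lebesgue measure). *)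

theory Defs
  imports "HOL-Analysis.Analysis"
begin

text \<open>Elements of PGL_2(R) are represented by a representative matrix
  [[a,b],[c,d]] written as the tuple (a,b,c,d).\<close>
type_synonym mat2 = "real \<times> real \<times> real \<times> real"

definition mat2_mult :: "mat2 \<Rightarrow> mat2 \<Rightarrow> mat2" where
  "mat2_mult M N = (case M of (a,b,c,d) \<Rightarrow> case N of (e,f,g,h) \<Rightarrow>
      (a*e + b*g, a*f + b*h, c*e + d*g, c*f + d*h))"

text \<open>Inverse in PGL_2: the adjugate represents the same projective class as the inverse.\<close>
definition pgl_inv :: "mat2 \<Rightarrow> mat2" where
  "pgl_inv M = (case M of (a,b,c,d) \<Rightarrow> (d, -b, -c, a))"

definition mob_act :: "mat2 \<Rightarrow> real \<Rightarrow> real" where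
  "mob_act M x = (case M of (a,b,c,d) \<Rightarrow> (a*x + b) / (c*x + d))"

definition s_fun :: "nat \<Rightarrow> real \<Rightarrow> real" where
  "s_fun q x = sin (x * pi / real q) / sin (pi / real q)"

definition g_mat :: "nat \<Rightarrow> nat \<Rightarrow> mat2" where
  "g_mat q k = (s_fun q (real k), - s_fun q (real k + 1), - s_fun q (real k - 1), s_fun q (real k))"

definition Q_mat :: mat2 where
  "Q_mat = (0, 1, 1, 0)"

definition K_set :: "nat \<Rightarrow> nat set" where
  "K_set q = {(q + 1) div 2 .. q - 1}"

definition tau :: "mat2 \<Rightarrow> (real \<Rightarrow> complex) \<Rightarrow> real \<Rightarrow> complex" where
  "tau g f x = complex_of_real \<bar>deriv (mob_act (pgl_inv g)) x\<bar> * f (mob_act (pgl_inv g) x)"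

definition PF_op :: "nat \<Rightarrow> (real \<Rightarrow> complex) \<Rightarrow> real \<Rightarrow> complex" where
  "PF_op q f x = (\<Sum>k\<in>K_set q. tau (g_mat q k) f x + tau (mat2_mult Q_mat (g_mat q k)) f x)"

end

theory Submission
  imports Defs
begin

text \<open>Write s_j = s(j) and q = 2m + 1, so that K = {m+1..2m}. The adjugate
  [[s_k, s_(k+1)], [s_(k-1), s_k]] of g_k has determinant s_k^2 - s_(k+1) s_(k-1) = 1, a
  product-to-sum identity for the sine, and s_(k-1) \<ge> s_k \<ge> s_(k+1) \<ge> 0 for k in K, because
  s_(j+1) - s_j has the sign of cos((2j+1)\<pi>/2q). Hence g_k^-1 and (Q g_k)^-1 map (0,1] into
  itself, and for such a map x \<mapsto> (ax+b)/(cx+d) of determinant \<plusminus>1 the Jacobian times h of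
  the image is 1/((ax+b)(cx+d)). By partial fractions the two terms of index k add up to
  P(k) - P(k-1), with P = PF_primitive q x, so the sum over K telescopes to P(2m) - P(m).
  Finally P(2m) = 1/x since s_q = 0, and P(m) = 0 since s_m = s_(m+1).\<close>

lemma sin_add_mult_sin_diff:
  fixes a t :: real
  shows "sin (a + t) * sin (a - t) = (sin a)\<^sup>2 - (sin t)\<^sup>2"
proof -
  have "sin (a + t) * sin (a - t) = (sin a * cos t)\<^sup>2 - (cos a * sin t)\<^sup>2"
    by (simp add: sin_add sin_diff power2_eq_square algebra_simps)
  also have "\<dots> = (sin a)\<^sup>2 * (1 - (sin t)\<^sup>2) - (1 - (sin a)\<^sup>2) * (sin t)\<^sup>2"
    by (simp add: power_mult_distrib cos_squared_eq)
  finally show ?thesis by (simp add: algebra_simps)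
qed

lemma s_fun_nonneg:
  assumes "0 \<le> r" and "r \<le> real q"
  shows "0 \<le> s_fun q r"
proof -
  have "r * pi / real q \<le> pi"
    using assms by (cases "q = 0") (auto simp: field_simps)
  then have "0 \<le> sin (r * pi / real q)"
    using assms by (intro sin_ge_zero) auto
  moreover have "0 \<le> sin (pi / real q)"
    by (cases "q = 0") (auto intro!: sin_ge_zero simp: field_simps)
  ultimately show ?thesis
    unfolding s_fun_def by simp
qed

lemma s_fun_pos:
  assumes "2 \<le> q" and "0 < r" and "r < real q"
  shows "0 < s_fun q r"
proof -
  have "0 < sin (r * pi / real q)" and "0 < sin (pi / real q)"
    using assms by (auto intro!: sin_gt_zero simp: field_simps)
  then show ?thesis
    unfolding s_fun_def by simp
qed

lemma s_fun_self [simp]: "s_fun q (real q) = 0"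
  unfolding s_fun_def by (cases "q = 0") auto

lemma s_fun_reflect: "s_fun q (real q - r) = s_fun q r"
proof (cases "q = 0")
  case False
  then have "(real q - r) * pi / real q = pi - r * pi / real q"
    by (simp add: field_simps)
  then show ?thesis
    unfolding s_fun_def by simp
qed (simp add: s_fun_def)

lemma s_fun_det:
  assumes "2 \<le> q"
  shows "(s_fun q r)\<^sup>2 - s_fun q (r + 1) * s_fun q (r - 1) = 1"
proof -
  define t where "t = pi / real q"
  define a where "a = r * pi / real q"
  have "0 < sin t"
    unfolding t_def using assms by (intro sin_gt_zero) (auto simp: field_simps)
  moreover have succ: "(r + 1) * pi / real q = a + t" and pred: "(r - 1) * pi / real q = a - t"
    by (simp_all add: a_def t_def add_divide_distrib diff_divide_distrib algebra_simps)
  ultimately show ?thesis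
    using sin_add_mult_sin_diff[of a t]
    unfolding s_fun_def succ pred a_def[symmetric] t_def[symmetric]
    by (simp add: field_simps power2_eq_square)
qed

lemma s_fun_succ_le:
  assumes "0 < q" and "real q \<le> 2 * r + 1" and "2 * r + 1 \<le> 2 * real q"
  shows "s_fun q (r + 1) \<le> s_fun q r"
proof -
  define t where "t = pi / real q"
  have "sin ((r + 1) * t) - sin (r * t) = 2 * sin (t / 2) * cos ((2 * r + 1) * t / 2)"
    unfolding sin_diff_sin by (simp add: algebra_simps add_divide_distrib)
  also have "\<dots> \<le> 0"
  proof (rule mult_nonneg_nonpos)
    show "0 \<le> 2 * sin (t / 2)"
      unfolding t_def using assms by (auto intro!: sin_ge_zero simp: field_simps)
    define u where "u = (2 * r + 1) / real q"
    have "1 \<le> u" and "u \<le> 2" and "(2 * r + 1) * t / 2 = pi / 2 * u"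
      unfolding u_def t_def using assms by (simp_all add: field_simps)
    then have "pi / 2 \<le> (2 * r + 1) * t / 2" and "(2 * r + 1) * t / 2 \<le> pi"
      by simp_all
    then have "cos ((2 * r + 1) * t / 2) \<le> cos (pi / 2)"
      by (intro cos_monotone_0_pi_le) auto
    then show "cos ((2 * r + 1) * t / 2) \<le> 0"
      by simp
  qed
  finally have "sin ((r + 1) * t) \<le> sin (r * t)"
    by simp
  moreover have "0 \<le> sin t"
    unfolding t_def using assms by (intro sin_ge_zero) (auto simp: field_simps)
  ultimately show ?thesis
    unfolding s_fun_def t_def by (simp add: divide_right_mono)
qed

lemma deriv_mob_act:
  assumes "c * x + d \<noteq> 0"
  shows "deriv (mob_act (a, b, c, d)) x = (a * d - b * c) / (c * x + d)\<^sup>2"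
proof -
  have "mob_act (a, b, c, d) = (\<lambda>x. (a * x + b) / (c * x + d))"
    by (simp add: mob_act_def fun_eq_iff)
  moreover have "((\<lambda>x. (a * x + b) / (c * x + d)) has_real_derivative
      (a * d - b * c) / (c * x + d)\<^sup>2) (at x)"
    using assms by (auto intro!: derivative_eq_intros simp: power2_eq_square algebra_simps)
  ultimately show ?thesis
    by (simp add: DERIV_imp_deriv)
qed

lemma diff_frac_linear:
  fixes a b c d x :: "'a::field"
  assumes "a * x + b \<noteq> 0" and "c * x + d \<noteq> 0"
  shows "a / (a * x + b) - c / (c * x + d) = (a * d - b * c) / ((a * x + b) * (c * x + d))"
  using assms by (simp add: field_simps)

lemma tau_recip_unimodular:
  assumes inv: "pgl_inv M = (a, b, c, d)" and det: "\<bar>a * d - b * c\<bar> = 1"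
    and y: "0 < (a * x + b) / (c * x + d)" "(a * x + b) / (c * x + d) \<le> 1"
    and recip: "\<And>y. 0 < y \<Longrightarrow> y \<le> 1 \<Longrightarrow> f y = complex_of_real (1 / y)"
  shows "tau M f x = complex_of_real (1 / ((a * x + b) * (c * x + d)))"
proof -
  have nz: "a * x + b \<noteq> 0" "c * x + d \<noteq> 0"
    using y(1) by auto
  then have "tau M f x = complex_of_real
      (\<bar>(a * d - b * c) / (c * x + d)\<^sup>2\<bar> * ((c * x + d) / (a * x + b)))"
    unfolding tau_def inv deriv_mob_act[OF nz(2)] using recip[OF y] by (simp add: mob_act_def)
  also have "\<dots> = complex_of_real (1 / ((a * x + b) * (c * x + d)))"
    using det nz by (simp add: abs_div power2_eq_square)
  finally show ?thesis .
qed

lemma s_fun_chain_on_K_set: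
  assumes "odd q" and "k \<in> K_set q"
  shows "0 \<le> s_fun q (real k + 1)" and "s_fun q (real k + 1) \<le> s_fun q (real k)"
    and "s_fun q (real k) \<le> s_fun q (real k - 1)" and "0 < s_fun q (real k)"
proof -
  obtain m where q: "q = 2 * m + 1"
    using assms(1) oddE by blast
  have k: "m + 1 \<le> k" "k \<le> 2 * m"
    using assms(2) unfolding K_set_def q by auto
  show "0 \<le> s_fun q (real k + 1)"
    using k q by (intro s_fun_nonneg) auto
  show "s_fun q (real k + 1) \<le> s_fun q (real k)"
    using k q by (intro s_fun_succ_le) auto
  show "s_fun q (real k) \<le> s_fun q (real k - 1)"
    using k q s_fun_succ_le[of q "real k - 1"] by auto
  show "0 < s_fun q (real k)"
    using k q by (intro s_fun_pos) auto
qed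

lemma K_set_odd_bounds: "odd q \<Longrightarrow> k \<in> K_set q \<Longrightarrow> 3 \<le> q \<and> 1 \<le> k"
  unfolding K_set_def by auto

lemma tau_g_mat_recip:
  assumes "odd q" and "k \<in> K_set q" and "0 < x" and "x \<le> 1"
    and "\<And>y. 0 < y \<Longrightarrow> y \<le> 1 \<Longrightarrow> f y = complex_of_real (1 / y)"
  defines "A \<equiv> s_fun q (real k - 1)" and "B \<equiv> s_fun q (real k)" and "C \<equiv> s_fun q (real k + 1)"
  shows "tau (g_mat q k) f x = complex_of_real (B / (B * x + C) - A / (A * x + B))"
proof -
  have "0 \<le> C" "C \<le> B" "B \<le> A" "0 < B"
    using s_fun_chain_on_K_set[OF assms(1,2)] unfolding A_def B_def C_def by auto
  moreover have "B * x \<le> A * x"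
    using \<open>B \<le> A\<close> \<open>0 < x\<close> by (simp add: mult_right_mono)
  ultimately have pos: "0 < B * x + C" "0 < A * x + B" and "B * x + C \<le> A * x + B"
    using \<open>0 < x\<close> by (simp_all add: add_pos_nonneg add_mono)
  then have "0 < (B * x + C) / (A * x + B)" "(B * x + C) / (A * x + B) \<le> 1"
    by auto
  moreover have det: "B * B - C * A = 1"
    using s_fun_det[of q "real k"] K_set_odd_bounds[OF assms(1,2)]
    unfolding A_def B_def C_def by (simp add: power2_eq_square)
  moreover have "pgl_inv (g_mat q k) = (B, C, A, B)"
    unfolding pgl_inv_def g_mat_def A_def B_def C_def by simp
  ultimately have "tau (g_mat q k) f x = complex_of_real (1 / ((B * x + C) * (A * x + B)))"
    using assms(5) by (intro tau_recip_unimodular) auto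
  also have "\<dots> = complex_of_real (B / (B * x + C) - A / (A * x + B))"
    using diff_frac_linear[of B x C A B] pos det by simp
  finally show ?thesis .
qed

lemma tau_Q_g_mat_recip:
  assumes "odd q" and "k \<in> K_set q" and "0 < x" and "x \<le> 1"
    and "\<And>y. 0 < y \<Longrightarrow> y \<le> 1 \<Longrightarrow> f y = complex_of_real (1 / y)"
  defines "A \<equiv> s_fun q (real k - 1)" and "B \<equiv> s_fun q (real k)" and "C \<equiv> s_fun q (real k + 1)"
  shows "tau (mat2_mult Q_mat (g_mat q k)) f x = complex_of_real (B / (B * x + A) - C / (C * x + B))"
proof -
  have "0 \<le> C" "C \<le> B" "B \<le> A" "0 < B"
    using s_fun_chain_on_K_set[OF assms(1,2)] unfolding A_def B_def C_def by auto
  moreover have "C * x \<le> B * x"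
    using \<open>C \<le> B\<close> \<open>0 < x\<close> by (simp add: mult_right_mono)
  ultimately have pos: "0 < B * x + A" "0 < C * x + B" and le: "C * x + B \<le> B * x + A"
    using \<open>0 < x\<close> by (simp_all add: add_nonneg_pos add_mono)
  have "- C * x + - B = - (C * x + B)" and "- B * x + - A = - (B * x + A)"
    by simp_all
  then have "(- C * x + - B) / (- B * x + - A) = (C * x + B) / (B * x + A)"
    by (simp only: minus_divide_divide)
  with pos le have "0 < (- C * x + - B) / (- B * x + - A)" "(- C * x + - B) / (- B * x + - A) \<le> 1"
    by auto
  moreover have det: "B * B - A * C = 1"
    using s_fun_det[of q "real k"] K_set_odd_bounds[OF assms(1,2)]
    unfolding A_def B_def C_def by (simp add: power2_eq_square mult.commute)
  moreover have "pgl_inv (mat2_mult Q_mat (g_mat q k)) = (- C, - B, - B, - A)"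
    unfolding pgl_inv_def g_mat_def mat2_mult_def Q_mat_def A_def B_def C_def by simp
  ultimately have "tau (mat2_mult Q_mat (g_mat q k)) f x
      = complex_of_real (1 / ((- C * x + - B) * (- B * x + - A)))"
    using assms(5) by (intro tau_recip_unimodular) (auto simp: algebra_simps)
  also have "\<dots> = complex_of_real (B / (B * x + A) - C / (C * x + B))"
    using diff_frac_linear[of B x A C B] pos det by (simp add: algebra_simps)
  finally show ?thesis .
qed

definition PF_primitive :: "nat \<Rightarrow> real \<Rightarrow> nat \<Rightarrow> real" where
  "PF_primitive q x j =
     s_fun q (real j) / (s_fun q (real j) * x + s_fun q (real j + 1))
     - s_fun q (real j + 1) / (s_fun q (real j + 1) * x + s_fun q (real j))"

lemma tau_pair_telescoping:
  assumes "odd q" and "k \<in> K_set q" and "0 < x" and "x \<le> 1"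
    and "\<And>y. 0 < y \<Longrightarrow> y \<le> 1 \<Longrightarrow> f y = complex_of_real (1 / y)"
  shows "tau (g_mat q k) f x + tau (mat2_mult Q_mat (g_mat q k)) f x
    = complex_of_real (PF_primitive q x k - PF_primitive q x (k - 1))"
proof -
  have "real (k - 1) = real k - 1"
    using K_set_odd_bounds[OF assms(1,2)] by simp
  then show ?thesis
    unfolding PF_primitive_def
    by (simp add: tau_g_mat_recip[OF assms] tau_Q_g_mat_recip[OF assms] flip: of_real_add)
qed

lemma PF_primitive_last:
  assumes "2 \<le> q" and "0 < x"
  shows "PF_primitive q x (q - 1) = 1 / x"
proof -
  have "real (q - 1) + 1 = real q"
    using assms(1) by simp
  moreover have "0 < s_fun q (real (q - 1))"
    using assms(1) by (intro s_fun_pos) auto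
  ultimately show ?thesis
    unfolding PF_primitive_def using assms(2) by simp
qed

lemma PF_primitive_middle:
  assumes "q = 2 * m + 1"
  shows "PF_primitive q x m = 0"
proof -
  have "s_fun q (real m + 1) = s_fun q (real m)"
    using s_fun_reflect[of q "real m"] assms by simp
  then show ?thesis
    unfolding PF_primitive_def by simp
qed

theorem proposition2p6:
  fixes q :: nat
  assumes "odd q" and "q \<ge> 3"
  defines "h \<equiv> (\<lambda>x::real. if 0 < x \<and> x \<le> 1 then complex_of_real (1 / x) else 0)"
  shows "\<forall>x\<in>{0<..1}. PF_op q h x = h x"
proof
  fix x :: real
  assume "x \<in> {0<..1}"
  then have x: "0 < x" "x \<le> 1"
    by auto
  have recip: "h y = complex_of_real (1 / y)" if "0 < y" "y \<le> 1" for y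
    using that by (simp add: h_def)
  obtain m where q: "q = 2 * m + 1"
    using \<open>odd q\<close> oddE by blast
  then have K: "K_set q = {Suc m..2 * m}"
    unfolding K_set_def by simp
  have "PF_op q h x = (\<Sum>k\<in>K_set q.
      complex_of_real (PF_primitive q x k - PF_primitive q x (k - 1)))"
    unfolding PF_op_def using tau_pair_telescoping[OF \<open>odd q\<close> _ x recip] by simp
  also have "\<dots> = complex_of_real (PF_primitive q x (2 * m) - PF_primitive q x m)"
    unfolding K using sum_telescope''[of m "2 * m" "\<lambda>j. complex_of_real (PF_primitive q x j)"]
    by simp
  also have "\<dots> = h x"
    using PF_primitive_last[of q x] PF_primitive_middle[OF q] q assms(2) x by (simp add: h_def)
  finally show "PF_op q h x = h x" .
qed

end
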